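(* There exists a universal constant $K_0$ such that for all positive integers $s$, $$\sum_{0\le k\le s/2}(1+t_k^2)\,p_k\le K_0.$$
   Context: For a positive integer $s$ and integers $0\le k\le s/2$, let $p_k=\binom{s-k}{k}\big/\sum_{0\le j\le s/2}\binom{s-j}{j}$ (so $p_k\ge0$ and $\sum_k p_k=1$; the denominator is the Fibonacci number $Fib_{s+1}$). Let $c_0=(5-\sqrt5)/10$, $k_0=\lfloor c_0 s\rfloor$, and $t_k=5^{3/4}(k-k_0)/\sqrt{s}$. *)

theory Defs
  imports Complex_Main
begin

text \<open>Normalising constant: sum over 0 <= j <= s/2 of binom(s-j, j) (equals Fib(s+1)).\<close>
definition fibnorm :: "nat \<Rightarrow> real" where
  "fibnorm s = (\<Sum>j\<in>{j. 2 * j \<le> s}. real ((s - j) choose j))"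

definition pk :: "nat \<Rightarrow> nat \<Rightarrow> real" where
  "pk s k = real ((s - k) choose k) / fibnorm s"

definition c0 :: real where
  "c0 = (5 - sqrt 5) / 10"

definition k0 :: "nat \<Rightarrow> int" where
  "k0 s = \<lfloor>c0 * real s\<rfloor>"

definition tk :: "nat \<Rightarrow> nat \<Rightarrow> real" where
  "tk s k = 5 powr (3/4) * (real k - real_of_int (k0 s)) / sqrt (real s)"

end

theory Submission
  imports Defs
begin

text \<open>
  Put F(s) = sum_k C(s-k,k). Pascal's rule C(s+2-k,k) = C(s+1-k,k) + C(s+1-k,k-1) gives every
  weighted sum sum_k C(s-k,k) g(k) a Fibonacci recurrence in s, with g shifted by one in the
  second term. For the first and second moments about c0 s this recurrence has no drift,
  because c0 phi = 1 - 2 c0 for the golden ratio phi: the first moment only picks up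
  c0 (F(s+1) - phi F(s)), which is bounded, so it stays O(F(s)), and the second moment is then
  O(s F(s)). Hence p has variance O(s) about k0, that is, sum_k t_k^2 p_k = O(1).
\<close>

definition diag_sum :: "nat \<Rightarrow> (nat \<Rightarrow> real) \<Rightarrow> real" where
  "diag_sum s g = (\<Sum>k\<le>s. real ((s - k) choose k) * g k)"

lemma diag_sum_eq_sum_half:
  "diag_sum s g = (\<Sum>k\<in>{k. 2 * k \<le> s}. real ((s - k) choose k) * g k)"
  unfolding diag_sum_def by (rule sum.mono_neutral_right) auto

lemma diag_sum_upto:
  assumes "s \<le> n"
  shows "diag_sum s g = (\<Sum>k\<le>n. real ((s - k) choose k) * g k)"
  unfolding diag_sum_def using assms by (intro sum.mono_neutral_left) auto

lemma choose_diff_Suc_Suc: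
  "(Suc (Suc s) - Suc k) choose Suc k = ((Suc s - Suc k) choose Suc k) + ((s - k) choose k)"
proof (cases "k \<le> s")
  case True
  then have "Suc (Suc s) - Suc k = Suc (s - k)" by simp
  with True show ?thesis by simp
qed simp

lemma diag_sum_Suc_Suc:
  "diag_sum (Suc (Suc s)) g = diag_sum (Suc s) g + diag_sum s (\<lambda>k. g (Suc k))"
proof -
  have "diag_sum (Suc (Suc s)) g
      = g 0 + (\<Sum>k\<le>Suc s. real ((Suc (Suc s) - Suc k) choose Suc k) * g (Suc k))"
    unfolding diag_sum_def by (subst sum.atMost_Suc_shift) simp
  also have "\<dots> = (g 0 + (\<Sum>k\<le>Suc s. real ((Suc s - Suc k) choose Suc k) * g (Suc k)))
      + (\<Sum>k\<le>Suc s. real ((s - k) choose k) * g (Suc k))"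
    by (simp only: choose_diff_Suc_Suc of_nat_add distrib_right sum.distrib add.assoc)
  also have "g 0 + (\<Sum>k\<le>Suc s. real ((Suc s - Suc k) choose Suc k) * g (Suc k))
      = diag_sum (Suc s) g"
    by (subst diag_sum_upto[of "Suc s" "Suc (Suc s)"]) (simp, subst sum.atMost_Suc_shift, simp)
  also have "(\<Sum>k\<le>Suc s. real ((s - k) choose k) * g (Suc k)) = diag_sum s (\<lambda>k. g (Suc k))"
    by (rule diag_sum_upto[symmetric]) simp
  finally show ?thesis .
qed

lemma diag_sum_cmult: "diag_sum s (\<lambda>k. c * g k) = c * diag_sum s g"
  by (simp add: diag_sum_def sum_distrib_left algebra_simps)

lemma diag_sum_const: "diag_sum s (\<lambda>_. c) = c * fibnorm s"
  by (simp add: diag_sum_eq_sum_half fibnorm_def sum_distrib_left mult.commute)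

lemma diag_sum_add_const: "diag_sum s (\<lambda>k. g k + c) = diag_sum s g + c * fibnorm s"
  by (simp add: diag_sum_def distrib_left sum.distrib flip: diag_sum_const)

lemma diag_sum_square_add_const:
  "diag_sum s (\<lambda>k. (g k + c)^2)
     = diag_sum s (\<lambda>k. (g k)^2) + 2 * c * diag_sum s g + c^2 * fibnorm s"
proof -
  have "diag_sum s (\<lambda>k. (g k + c)^2)
      = diag_sum s (\<lambda>k. (g k)^2) + 2 * c * diag_sum s g + diag_sum s (\<lambda>_. c^2)"
    by (simp add: diag_sum_def power2_eq_square algebra_simps sum.distrib sum_distrib_left)
  then show ?thesis by (simp only: diag_sum_const)
qed

lemma fibnorm_Suc_Suc: "fibnorm (Suc (Suc s)) = fibnorm (Suc s) + fibnorm s"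
  using diag_sum_Suc_Suc[of s "\<lambda>_. 1"] by (simp add: diag_sum_const)

lemma fibnorm_0: "fibnorm 0 = 1"
  and fibnorm_1: "fibnorm (Suc 0) = 1"
  using diag_sum_const[of 0 1] diag_sum_const[of "Suc 0" 1] by (simp_all add: diag_sum_def)

lemma fibnorm_ge_1: "1 \<le> fibnorm s"
  by (induction s rule: induct_nat_012) (simp_all add: fibnorm_0 fibnorm_1 fibnorm_Suc_Suc)

definition golden_ratio :: real where
  "golden_ratio = (1 + sqrt 5) / 2"

lemma golden_ratio_square: "golden_ratio * golden_ratio = golden_ratio + 1"
  by (simp add: golden_ratio_def field_simps)

lemma sqrt_5_bounds: "2 < sqrt (5::real)" "sqrt (5::real) < 3"
proof -
  show "2 < sqrt (5::real)" by (rule real_less_rsqrt) simp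
  show "sqrt (5::real) < 3" by (rule real_sqrt_less_mono[of 5 9, simplified])
qed

lemma golden_ratio_bounds: "1 < golden_ratio" "golden_ratio < 2"
  using sqrt_5_bounds by (auto simp: golden_ratio_def)

lemma c0_bounds: "0 < c0" "c0 < 1/2"
  using sqrt_5_bounds by (auto simp: c0_def)

lemma c0_golden_ratio: "c0 * golden_ratio = 1 - 2 * c0"
  by (simp add: golden_ratio_def c0_def field_simps)

lemma fibnorm_Suc_minus_golden_ratio: "\<bar>fibnorm (Suc s) - golden_ratio * fibnorm s\<bar> \<le> 1"
proof (induction s)
  case 0
  then show ?case using golden_ratio_bounds by (simp add: fibnorm_0 fibnorm_1)
next
  case (Suc s)
  have "golden_ratio * (golden_ratio * fibnorm s) = (golden_ratio + 1) * fibnorm s"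
    by (metis golden_ratio_square mult.assoc)
  then have "fibnorm (Suc (Suc s)) - golden_ratio * fibnorm (Suc s)
      = (1 - golden_ratio) * (fibnorm (Suc s) - golden_ratio * fibnorm s)"
    by (simp add: fibnorm_Suc_Suc algebra_simps)
  also have "\<bar>\<dots>\<bar> \<le> 1 * 1"
    unfolding abs_mult using Suc golden_ratio_bounds by (intro mult_mono) auto
  finally show ?case by simp
qed

definition centered :: "nat \<Rightarrow> nat \<Rightarrow> real" where
  "centered s k = real k - c0 * real s"

lemma centered_Suc_Suc: "centered (Suc (Suc s)) = (\<lambda>k. centered (Suc s) k + - c0)"
  by (auto simp: centered_def algebra_simps)

lemma centered_Suc_Suc_Suc: "centered (Suc (Suc s)) (Suc k) = centered s k + (1 - 2 * c0)"
  by (simp add: centered_def algebra_simps)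

definition first_moment :: "nat \<Rightarrow> real" where
  "first_moment s = diag_sum s (centered s)"

definition second_moment :: "nat \<Rightarrow> real" where
  "second_moment s = diag_sum s (\<lambda>k. (centered s k)^2)"

lemma first_moment_Suc_Suc:
  "first_moment (Suc (Suc s)) = first_moment (Suc s) + first_moment s
     - c0 * (fibnorm (Suc s) - golden_ratio * fibnorm s)"
proof -
  have "first_moment (Suc (Suc s))
      = diag_sum (Suc s) (\<lambda>k. centered (Suc s) k + - c0)
        + diag_sum s (\<lambda>k. centered s k + (1 - 2 * c0))"
    unfolding first_moment_def diag_sum_Suc_Suc centered_Suc_Suc_Suc
    by (simp only: centered_Suc_Suc)
  also have "\<dots> = first_moment (Suc s) + first_moment s
      - c0 * fibnorm (Suc s) + (1 - 2 * c0) * fibnorm s"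
    unfolding diag_sum_add_const first_moment_def by simp
  finally show ?thesis
    by (simp add: right_diff_distrib mult.assoc[symmetric] c0_golden_ratio)
qed

lemma second_moment_Suc_Suc:
  "second_moment (Suc (Suc s)) = second_moment (Suc s) + second_moment s
     - 2 * c0 * first_moment (Suc s) + 2 * (1 - 2 * c0) * first_moment s
     + c0^2 * fibnorm (Suc s) + (1 - 2 * c0)^2 * fibnorm s"
proof -
  have "second_moment (Suc (Suc s))
      = diag_sum (Suc s) (\<lambda>k. (centered (Suc s) k + - c0)^2)
        + diag_sum s (\<lambda>k. (centered s k + (1 - 2 * c0))^2)"
    unfolding second_moment_def diag_sum_Suc_Suc centered_Suc_Suc_Suc
    by (simp only: centered_Suc_Suc)
  then show ?thesis
    unfolding diag_sum_square_add_const second_moment_def first_moment_def by simp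
qed

lemma first_moment_bound: "\<bar>first_moment s\<bar> \<le> 2 * fibnorm s - 1"
proof (induction s rule: induct_nat_012)
  case 0
  then show ?case by (simp add: first_moment_def diag_sum_def fibnorm_0 centered_def)
next
  case 1
  then show ?case
    using c0_bounds by (simp add: first_moment_def diag_sum_def fibnorm_1 centered_def)
next
  case (ge2 s)
  have "\<bar>c0 * (fibnorm (Suc s) - golden_ratio * fibnorm s)\<bar> \<le> 1"
    using fibnorm_Suc_minus_golden_ratio[of s] c0_bounds by (simp add: abs_mult mult_le_one)
  moreover have "\<bar>x + y - z\<bar> \<le> \<bar>x\<bar> + \<bar>y\<bar> + \<bar>z\<bar>" for x y z :: real
    by linarith
  ultimately show ?case
    using ge2 unfolding first_moment_Suc_Suc fibnorm_Suc_Suc by fastforce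
qed

lemma second_moment_bound: "second_moment s \<le> 3 * (real s + 1) * fibnorm s"
proof (induction s rule: induct_nat_012)
  case 0
  then show ?case by (simp add: second_moment_def diag_sum_def fibnorm_0 centered_def)
next
  case 1
  have "c0^2 \<le> 1" using c0_bounds by (simp add: power_le_one)
  then show ?case by (simp add: second_moment_def diag_sum_def fibnorm_1 centered_def)
next
  case (ge2 s)
  have F: "1 \<le> fibnorm s" "1 \<le> fibnorm (Suc s)" by (rule fibnorm_ge_1)+
  have "\<bar>2 * c0 * first_moment (Suc s)\<bar> \<le> \<bar>first_moment (Suc s)\<bar>"
    using c0_bounds by (simp add: abs_mult mult_left_le_one_le)
  moreover have "\<bar>(1 - 2 * c0) * first_moment s\<bar> \<le> \<bar>first_moment s\<bar>"
    unfolding abs_mult using c0_bounds by (intro mult_left_le_one_le) auto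
  moreover have "c0^2 * fibnorm (Suc s) \<le> fibnorm (Suc s)"
    and "(1 - 2 * c0)^2 * fibnorm s \<le> fibnorm s"
    using c0_bounds F by (auto intro!: mult_left_le_one_le power_le_one)
  moreover have "3 * (real (Suc (Suc s)) + 1) * fibnorm (Suc (Suc s))
      = 3 * (real (Suc s) + 1) * fibnorm (Suc s) + 3 * fibnorm (Suc s)
        + 3 * (real s + 1) * fibnorm s + 6 * fibnorm s"
    by (simp add: fibnorm_Suc_Suc algebra_simps)
  ultimately show ?case
    using ge2 F first_moment_bound[of s] first_moment_bound[of "Suc s"]
    unfolding second_moment_Suc_Suc by linarith
qed

lemma sum_pk_eq_diag_sum:
  "(\<Sum>k\<in>{k. 2 * k \<le> s}. g k * pk s k) = diag_sum s g / fibnorm s"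
  unfolding pk_def diag_sum_eq_sum_half by (simp add: sum_divide_distrib mult.commute)

lemma pk_nonneg: "0 \<le> pk s k"
  unfolding pk_def using fibnorm_ge_1[of s] by simp

lemma square_add_le: "b^2 \<le> 1 \<Longrightarrow> (a + b)^2 \<le> 2 * a^2 + (2::real)"
proof -
  assume "b^2 \<le> 1"
  moreover have "(a + b)^2 + (a - b)^2 = 2 * a^2 + 2 * b^2"
    by (simp add: power2_eq_square algebra_simps)
  moreover have "0 \<le> (a - b)^2" by simp
  ultimately show ?thesis by linarith
qed

lemma square_diff_floor_le: "(y - real_of_int \<lfloor>x\<rfloor>)^2 \<le> 2 * (y - x)^2 + 2"
proof -
  define r where "r = x - real_of_int \<lfloor>x\<rfloor>"
  have "0 \<le> r" "r \<le> 1" unfolding r_def by linarith+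
  then have "r^2 \<le> 1" by (simp add: power_le_one)
  moreover have "y - real_of_int \<lfloor>x\<rfloor> = (y - x) + r" unfolding r_def by simp
  ultimately show ?thesis by (simp only: square_add_le)
qed

lemma tk_square_le:
  assumes "0 < s"
  shows "(tk s k)^2 \<le> 2 * (5 powr (3/4))^2 / real s * ((centered s k)^2 + 1)"
proof -
  have "(tk s k)^2 = (5 powr (3/4))^2 / real s * (real k - real_of_int (k0 s))^2"
    unfolding tk_def using assms by (simp add: power_divide power_mult_distrib)
  also have "\<dots> \<le> (5 powr (3/4))^2 / real s * (2 * (centered s k)^2 + 2)"
    unfolding k0_def centered_def by (intro mult_left_mono square_diff_floor_le) simp
  finally show ?thesis by (simp add: algebra_simps)
qed

theorem lemma6:
  shows "\<exists>K0::real. \<forall>s::nat. s > 0 \<longrightarrow>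
           (\<Sum>k\<in>{k. 2 * k \<le> s}. (1 + (tk s k)^2) * pk s k) \<le> K0"
proof (intro exI allI impI)
  define P :: real where "P = (5 powr (3/4))^2"
  fix s :: nat
  assume s: "s > 0"
  define a where "a = 2 * P / real s"
  have "1 + (tk s k)^2 \<le> a * (centered s k)^2 + (1 + a)" for k
    using tk_square_le[OF s, of k] unfolding a_def P_def by (simp add: distrib_left)
  then have "(\<Sum>k\<in>{k. 2 * k \<le> s}. (1 + (tk s k)^2) * pk s k)
      \<le> (\<Sum>k\<in>{k. 2 * k \<le> s}. (a * (centered s k)^2 + (1 + a)) * pk s k)"
    by (intro sum_mono mult_right_mono pk_nonneg)
  also have "\<dots> = a * (second_moment s / fibnorm s) + (1 + a)"
    unfolding sum_pk_eq_diag_sum diag_sum_add_const diag_sum_cmult second_moment_def[symmetric]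
    using fibnorm_ge_1[of s] by (simp add: field_simps)
  also have "\<dots> \<le> a * (6 * real s) + (1 + a)"
  proof -
    have "second_moment s / fibnorm s \<le> 3 * (real s + 1)"
      using second_moment_bound[of s] fibnorm_ge_1[of s] by (simp add: divide_le_eq)
    also have "\<dots> \<le> 6 * real s" using s by simp
    finally show ?thesis unfolding a_def P_def by (intro add_right_mono mult_left_mono) simp_all
  qed
  also have "\<dots> \<le> 1 + 14 * P"
    using s unfolding a_def P_def by (simp add: field_simps)
  finally show "(\<Sum>k\<in>{k. 2 * k \<le> s}. (1 + (tk s k)^2) * pk s k) \<le> 1 + 14 * P" .
qed

end
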